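(* Every finite graph is isomorphic to an induced subgraph of the generating graph of some finite group.
   Context: The generating graph of a finite group $G$ has vertex set $G$, with distinct $x,y$ adjacent iff $\langle x,y\rangle=G$. *)

theory Defs
  imports "HOL-Algebra.Algebra"
begin

definition gen_graph_adj :: "('g, 'b) monoid_scheme \<Rightarrow> 'g \<Rightarrow> 'g \<Rightarrow> bool" where
  "gen_graph_adj G x y \<longleftrightarrow>
     x \<in> carrier G \<and> y \<in> carrier G \<and> x \<noteq> y \<and> generate G {x, y} = carrier G"

end

theory Submission
  imports Defs "HOL-Computational_Algebra.Primes"
begin

text \<open>Give every independent set of at most two vertices, the empty set included, its own
  prime, and send a vertex v to the product of the primes of the sets containing v. Two such
  codes are coprime exactly when no independent set contains both vertices, i.e. when the
  vertices are adjacent. The codes are proper divisors of the product n of all the primes, and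
  in the cyclic group of order n two divisors of n generate the group iff they are coprime.\<close>

definition nat_mod_group :: "nat \<Rightarrow> nat monoid" where
  "nat_mod_group n = \<lparr>carrier = {..<n}, monoid.mult = (\<lambda>x y. (x + y) mod n), one = 0\<rparr>"

lemma nat_mod_group_simps [simp]:
  "carrier (nat_mod_group n) = {..<n}"
  "x \<otimes>\<^bsub>nat_mod_group n\<^esub> y = (x + y) mod n"
  "\<one>\<^bsub>nat_mod_group n\<^esub> = 0"
  by (simp_all add: nat_mod_group_def)

lemma nat_mod_group_is_group:
  assumes "0 < n"
  shows "group (nat_mod_group n)"
proof (rule groupI)
  fix x assume "x \<in> carrier (nat_mod_group n)"
  then show "\<exists>y\<in>carrier (nat_mod_group n). y \<otimes>\<^bsub>nat_mod_group n\<^esub> x = \<one>\<^bsub>nat_mod_group n\<^esub>"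
    using assms by (intro bexI[of _ "(n - x) mod n"]) (auto simp: mod_add_left_eq)
qed (use assms in \<open>auto simp: mod_add_left_eq mod_add_right_eq add.assoc\<close>)

lemma nat_mod_group_inv:
  assumes "x < n"
  shows "inv\<^bsub>nat_mod_group n\<^esub> x = (n - x) mod n"
  using assms
  by (intro group.inv_equality[OF nat_mod_group_is_group]) (auto simp: mod_add_left_eq)

lemma nat_mod_group_multiples_subgroup:
  assumes "0 < n" and "d dvd n"
  shows "subgroup {z. z < n \<and> d dvd z} (nat_mod_group n)"
proof (rule group.subgroupI[OF nat_mod_group_is_group[OF \<open>0 < n\<close>]])
  fix a assume "a \<in> {z. z < n \<and> d dvd z}"
  then show "inv\<^bsub>nat_mod_group n\<^esub> a \<in> {z. z < n \<and> d dvd z}"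
    using assms by (simp add: nat_mod_group_inv dvd_mod_iff dvd_diff_nat)
qed (use assms in \<open>auto simp: dvd_mod_iff\<close>)

lemma generate_nat_mod_group_neq_carrier:
  assumes "0 < n" and "d dvd n" and "d \<noteq> 1"
    and "A \<subseteq> {..<n}" and "\<And>a. a \<in> A \<Longrightarrow> d dvd a"
  shows "generate (nat_mod_group n) A \<noteq> carrier (nat_mod_group n)"
proof
  assume gen: "generate (nat_mod_group n) A = carrier (nat_mod_group n)"
  have "generate (nat_mod_group n) A \<subseteq> {z. z < n \<and> d dvd z}"
    using assms
    by (intro group.generate_subgroup_incl[OF nat_mod_group_is_group _ nat_mod_group_multiples_subgroup])
       auto
  moreover have "1 < n"
    using dvd_pos_nat[OF \<open>0 < n\<close> \<open>d dvd n\<close>] dvd_imp_le[OF \<open>d dvd n\<close> \<open>0 < n\<close>] \<open>d \<noteq> 1\<close>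
    by linarith
  ultimately have "d dvd 1"
    using gen by auto
  then show False
    using \<open>d \<noteq> 1\<close> by simp
qed

lemma generate_nat_mod_group_mult_closed:
  assumes "g \<in> generate (nat_mod_group n) A"
  shows "(k * g) mod n \<in> generate (nat_mod_group n) A"
proof (induction k)
  case 0
  show ?case
    using generate.one[of "nat_mod_group n" A] by simp
next
  case (Suc k)
  then have "(g + (k * g) mod n) mod n \<in> generate (nat_mod_group n) A"
    using generate.eng[OF assms Suc] by simp
  then show ?case
    by (simp add: mod_add_right_eq)
qed

lemma generate_nat_mod_group_coprime:
  assumes "x \<noteq> 0" and "x < n" and "y < n" and "coprime x y"
  shows "generate (nat_mod_group n) {x, y} = carrier (nat_mod_group n)"
proof -
  let ?H = "generate (nat_mod_group n) {x, y}"
  obtain a b where ab: "x * a = y * b + 1"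
    using bezout_nat[OF \<open>x \<noteq> 0\<close>, of y] \<open>coprime x y\<close> by auto
  \<comment> \<open>(n - 1) b y stands for -b y, so the sum below is a x - b y = 1 modulo n\<close>
  have "((a * x) mod n + ((n - 1) * b * y) mod n) mod n \<in> ?H"
    using generate.eng[OF generate_nat_mod_group_mult_closed generate_nat_mod_group_mult_closed,
        OF generate.incl generate.incl, of x "{x, y}" y]
    by simp
  moreover have "((a * x) mod n + ((n - 1) * b * y) mod n) mod n = 1 mod n"
  proof -
    have "a * x + (n - 1) * b * y = 1 + n * (b * y)"
      using ab \<open>x < n\<close> by (simp add: algebra_simps diff_mult_distrib)
    then show ?thesis
      by (simp only: mod_add_eq mod_mult_self2)
  qed
  moreover have "1 < n"
    using \<open>x \<noteq> 0\<close> \<open>x < n\<close> by linarith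
  ultimately have "1 \<in> ?H"
    by simp
  then have "{..<n} \<subseteq> ?H"
    using generate_nat_mod_group_mult_closed[of 1 n "{x, y}"]
    by (metis lessThan_iff mod_less mult_1_right subsetI)
  moreover have "?H \<subseteq> {..<n}"
    using group.generate_in_carrier[OF nat_mod_group_is_group, of n "{x, y}"] assms by auto
  ultimately show ?thesis
    by simp
qed

lemma gen_graph_adj_nat_mod_group_iff:
  assumes "x dvd n" and "y dvd n" and "x < n" and "y < n"
  shows "gen_graph_adj (nat_mod_group n) x y \<longleftrightarrow> x \<noteq> y \<and> coprime x y"
proof -
  have "x \<noteq> 0"
    using assms by auto
  have "generate (nat_mod_group n) {x, y} \<noteq> carrier (nat_mod_group n)" if "\<not> coprime x y"
  proof (rule generate_nat_mod_group_neq_carrier)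
    show "gcd x y dvd n"
      using \<open>x dvd n\<close> by (meson dvd_trans gcd_dvd1)
    show "gcd x y \<noteq> 1"
      using that by (simp add: coprime_iff_gcd_eq_1)
  qed (use assms in auto)
  then show ?thesis
    using generate_nat_mod_group_coprime[OF \<open>x \<noteq> 0\<close> \<open>x < n\<close> \<open>y < n\<close>] assms
    unfolding gen_graph_adj_def by auto
qed

locale prime_labelling =
  fixes I :: "'a set set" and P :: "'a set \<Rightarrow> nat"
  assumes finite_family: "finite I"
    and inj_labels: "inj_on P I"
    and prime_labels: "S \<in> I \<Longrightarrow> Factorial_Ring.prime (P S)"
begin

definition code :: "'a \<Rightarrow> nat" where
  "code v = (\<Prod>S \<in> {S \<in> I. v \<in> S}. P S)"

definition modulus :: nat where
  "modulus = (\<Prod>S \<in> I. P S)"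

lemma finite_sets_containing: "finite {S \<in> I. v \<in> S}"
  using finite_family by simp

lemma label_dvd_code_iff:
  assumes "S \<in> I"
  shows "P S dvd code v \<longleftrightarrow> v \<in> S"
proof
  assume "P S dvd code v"
  then obtain S' where S': "S' \<in> I" "v \<in> S'" "P S dvd P S'"
    using prime_dvd_prod_iff[OF finite_sets_containing prime_labels[OF assms]]
    unfolding code_def by blast
  then have "P S = P S'"
    using primes_dvd_imp_eq prime_labels assms by blast
  then show "v \<in> S"
    using inj_onD[OF inj_labels] S' assms by metis
next
  assume "v \<in> S"
  then show "P S dvd code v"
    unfolding code_def using assms finite_sets_containing by (intro dvd_prodI) auto
qed

lemma coprime_code_iff: "coprime (code u) (code v) \<longleftrightarrow> (\<forall>S\<in>I. u \<in> S \<longrightarrow> v \<notin> S)"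
proof
  assume "coprime (code u) (code v)"
  then show "\<forall>S\<in>I. u \<in> S \<longrightarrow> v \<notin> S"
    using label_dvd_code_iff not_coprimeI prime_labels not_prime_unit by metis
next
  assume disjoint: "\<forall>S\<in>I. u \<in> S \<longrightarrow> v \<notin> S"
  have "coprime (P S) (P S')" if "S \<in> I" "u \<in> S" "S' \<in> I" "v \<in> S'" for S S'
    using that disjoint inj_onD[OF inj_labels] by (metis primes_coprime prime_labels)
  then show "coprime (code u) (code v)"
    unfolding code_def by (intro prod_coprime_left prod_coprime_right) auto
qed

lemma modulus_pos: "0 < modulus"
  unfolding modulus_def using prime_labels by (simp add: prime_gt_0_nat prod_pos)

lemma code_dvd_modulus: "code v dvd modulus"
  unfolding code_def modulus_def using finite_family by (intro prod_dvd_prod_subset) auto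

lemma code_less_modulus:
  assumes "S \<in> I" and "v \<notin> S"
  shows "code v < modulus"
proof -
  have "P S dvd modulus"
    unfolding modulus_def using finite_family assms by (intro dvd_prodI)
  then have "code v \<noteq> modulus"
    using label_dvd_code_iff assms by metis
  then show ?thesis
    using dvd_imp_le[OF code_dvd_modulus modulus_pos, of v] by linarith
qed

end

lemma ex_prime_labelling:
  assumes "finite I"
  shows "\<exists>P. prime_labelling I P"
proof -
  obtain B where "finite B" "card B = card I" "B \<subseteq> {p :: nat. Factorial_Ring.prime p}"
    using infinite_arbitrarily_large[OF primes_infinite] by blast
  moreover obtain P where "P ` I \<subseteq> B" "inj_on P I"
    using card_le_inj[OF assms \<open>finite B\<close>] \<open>card B = card I\<close> by auto
  ultimately show ?thesis
    using assms by (intro exI[of _ P] prime_labelling.intro) auto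
qed

lemma finite_graph_coprime_representation:
  fixes V :: "'a set" and E :: "'a \<Rightarrow> 'a \<Rightarrow> bool"
  assumes "finite V"
    and sym: "\<And>u v. E u v \<Longrightarrow> E v u"
    and irrefl: "\<And>v. \<not> E v v"
  shows "\<exists>(n :: nat) f. 0 < n \<and> inj_on f V \<and> (\<forall>v\<in>V. f v dvd n \<and> f v < n) \<and>
           (\<forall>u\<in>V. \<forall>v\<in>V. E u v \<longleftrightarrow> coprime (f u) (f v))"
proof -
  define I where "I = {S. S \<subseteq> V \<and> card S \<le> 2 \<and> (\<forall>u\<in>S. \<forall>v\<in>S. \<not> E u v)}"
  have "finite I"
    using \<open>finite V\<close> by (intro finite_subset[of I "Pow V"]) (auto simp: I_def)
  then obtain P where "prime_labelling I P"
    using ex_prime_labelling by blast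
  then interpret prime_labelling I P .
  have pair_in_I: "{u, v} \<in> I" if "u \<in> V" "v \<in> V" "\<not> E u v" for u v
  proof -
    have "\<not> E v u"
      using sym \<open>\<not> E u v\<close> by blast
    then show ?thesis
      unfolding I_def using that irrefl by (auto simp: card_insert_if)
  qed
  have "inj_on code V"
  proof (rule inj_onI)
    fix u v assume "u \<in> V" "code u = code v"
    then have "{u} \<in> I"
      using pair_in_I[of u u] irrefl by simp
    then have "P {u} dvd code v"
      using label_dvd_code_iff[of "{u}" u] \<open>code u = code v\<close> by simp
    then show "u = v"
      using label_dvd_code_iff[OF \<open>{u} \<in> I\<close>, of v] by simp
  qed
  moreover have "code v < modulus" for v
    by (rule code_less_modulus[of "{}"]) (simp_all add: I_def)
  moreover have "E u v \<longleftrightarrow> coprime (code u) (code v)" if "u \<in> V" "v \<in> V" for u v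
  proof -
    have "(\<exists>S\<in>I. u \<in> S \<and> v \<in> S) \<longleftrightarrow> \<not> E u v"
      using pair_in_I[OF that] unfolding I_def by blast
    then show ?thesis
      unfolding coprime_code_iff by blast
  qed
  ultimately show ?thesis
    using modulus_pos code_dvd_modulus by (intro exI[of _ modulus] exI[of _ code]) simp
qed

theorem theorem5p2:
  fixes V :: "'a set" and E :: "'a \<Rightarrow> 'a \<Rightarrow> bool"
  assumes "finite V"
    and "\<And>u v. E u v \<Longrightarrow> E v u"
    and "\<And>v. \<not> E v v"
  shows "\<exists>(G :: nat monoid) f. group G \<and> finite (carrier G) \<and>
           f ` V \<subseteq> carrier G \<and> inj_on f V \<and>
           (\<forall>u\<in>V. \<forall>v\<in>V. E u v \<longleftrightarrow> gen_graph_adj G (f u) (f v))"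
proof -
  obtain n :: nat and f :: "'a \<Rightarrow> nat"
    where "0 < n" and inj: "inj_on f V" and divisors: "\<forall>v\<in>V. f v dvd n \<and> f v < n"
      and coprime: "\<forall>u\<in>V. \<forall>v\<in>V. E u v \<longleftrightarrow> coprime (f u) (f v)"
    using finite_graph_coprime_representation[of V E] assms by blast
  have "E u v \<longleftrightarrow> gen_graph_adj (nat_mod_group n) (f u) (f v)" if "u \<in> V" "v \<in> V" for u v
  proof -
    have "f u \<noteq> f v" if "E u v"
      using inj_onD[OF inj] \<open>u \<in> V\<close> \<open>v \<in> V\<close> assms(3) that by metis
    then show ?thesis
      using gen_graph_adj_nat_mod_group_iff[of "f u" n "f v"] divisors coprime that by auto
  qed
  then show ?thesis
    using nat_mod_group_is_group[OF \<open>0 < n\<close>] inj divisors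
    by (intro exI[of _ "nat_mod_group n"] exI[of _ f]) auto
qed

end
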